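(* Let $\mathcal{M}$ be a minimally $k$-level matroid and $F$ a $k$-level flacet of $\mathcal{M}$. Then $\operatorname{rk}(F)=k-1$.
   Context: Levelness of a matroid $\mathcal{M}=(E,\mathcal{B})$: the least $k$ such that every facet-defining affine function takes at most $k$ distinct values on $V_{\mathcal{M}}=\{\mathbf{1}_B:B\in\mathcal{B}\}$ (facets are inclusion-maximal faces $\{v\in V_{\mathcal{M}}:\ell(v)=0\}\neq V_{\mathcal{M}}$ for affine $\ell\ge0$ on $V_{\mathcal{M}}$). $\mathcal{M}$ is minimally $k$-level if its levelness is $k$ and every proper minor has strictly smaller levelness. A flacet is a flat $\emptyset\neq S\subsetneq E$ such that the restriction $\mathcal{M}|_S$ and contraction $\mathcal{M}/S$ are connected; a flacet $F$ is $k$-level if $\ell_F(x)=\sum_{e\in F}x_e$ takes exactly $k$ distinct values on $V_{\mathcal{M}}$. *)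

theory Defs
  imports Main "HOL-Library.Indicator_Function"
begin

type_synonym 'a matroid = "'a set \<times> 'a set set"

definition ground :: "'a matroid \<Rightarrow> 'a set" where "ground M = fst M"
definition bases :: "'a matroid \<Rightarrow> 'a set set" where "bases M = snd M"

definition matroid :: "'a matroid \<Rightarrow> bool" where
  "matroid M \<longleftrightarrow> finite (ground M) \<and> bases M \<noteq> {} \<and>
     (\<forall>B\<in>bases M. B \<subseteq> ground M) \<and>
     (\<forall>B1\<in>bases M. \<forall>B2\<in>bases M. \<forall>x\<in>B1 - B2.
        \<exists>y\<in>B2 - B1. insert y (B1 - {x}) \<in> bases M)"

definition indep :: "'a matroid \<Rightarrow> 'a set \<Rightarrow> bool" where
  "indep M I \<longleftrightarrow> (\<exists>B\<in>bases M. I \<subseteq> B)"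

definition rk :: "'a matroid \<Rightarrow> 'a set \<Rightarrow> nat" where
  "rk M S = Max ((\<lambda>B. card (B \<inter> S)) ` bases M)"

definition restrict :: "'a matroid \<Rightarrow> 'a set \<Rightarrow> 'a matroid" where
  "restrict M S = (S, {I. I \<subseteq> S \<and> indep M I \<and>
                          (\<forall>J. I \<subset> J \<and> J \<subseteq> S \<longrightarrow> \<not> indep M J)})"

definition contract :: "'a matroid \<Rightarrow> 'a set \<Rightarrow> 'a matroid" where
  "contract M S = (ground M - S, {B - S | B. B \<in> bases M \<and> card (B \<inter> S) = rk M S})"

definition proper_minor :: "'a matroid \<Rightarrow> 'a matroid \<Rightarrow> bool" where
  "proper_minor N M \<longleftrightarrow> (\<exists>S C. C \<subseteq> S \<and> S \<subseteq> ground M \<and> (C \<noteq> {} \<or> S \<noteq> ground M)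
                          \<and> N = contract (restrict M S) C)"

definition connected :: "'a matroid \<Rightarrow> bool" where
  "connected M \<longleftrightarrow> \<not> (\<exists>S. S \<noteq> {} \<and> S \<subset> ground M \<and>
      bases M = {B1 \<union> B2 | B1 B2. B1 \<in> bases (restrict M S)
                                 \<and> B2 \<in> bases (restrict M (ground M - S))})"

definition flat :: "'a matroid \<Rightarrow> 'a set \<Rightarrow> bool" where
  "flat M S \<longleftrightarrow> S \<subseteq> ground M \<and> (\<forall>e \<in> ground M - S. rk M (insert e S) > rk M S)"

definition flacet :: "'a matroid \<Rightarrow> 'a set \<Rightarrow> bool" where
  "flacet M S \<longleftrightarrow> flat M S \<and> S \<noteq> {} \<and> S \<subset> ground M \<and>
     connected (restrict M S) \<and> connected (contract M S)"

text \<open>Vertex set V_M of the base polytope: indicator vectors of bases.\<close>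
definition verts :: "'a matroid \<Rightarrow> ('a \<Rightarrow> real) set" where
  "verts M = (\<lambda>B. indicator B) ` bases M"

definition aff :: "'a matroid \<Rightarrow> ('a \<Rightarrow> real) \<Rightarrow> real \<Rightarrow> ('a \<Rightarrow> real) \<Rightarrow> real" where
  "aff M a c x = (\<Sum>e\<in>ground M. a e * x e) + c"

definition face_of_aff :: "'a matroid \<Rightarrow> ('a \<Rightarrow> real) \<Rightarrow> real \<Rightarrow> ('a \<Rightarrow> real) set" where
  "face_of_aff M a c = {v \<in> verts M. aff M a c v = 0}"

definition is_face :: "'a matroid \<Rightarrow> ('a \<Rightarrow> real) set \<Rightarrow> bool" where
  "is_face M F \<longleftrightarrow> (\<exists>a c. (\<forall>v\<in>verts M. aff M a c v \<ge> 0) \<and> F = face_of_aff M a c)"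

definition is_facet :: "'a matroid \<Rightarrow> ('a \<Rightarrow> real) set \<Rightarrow> bool" where
  "is_facet M F \<longleftrightarrow> is_face M F \<and> F \<noteq> verts M \<and>
     (\<forall>G. is_face M G \<and> G \<noteq> verts M \<and> F \<subseteq> G \<longrightarrow> G = F)"

definition facet_defining :: "'a matroid \<Rightarrow> ('a \<Rightarrow> real) \<Rightarrow> real \<Rightarrow> bool" where
  "facet_defining M a c \<longleftrightarrow> (\<forall>v\<in>verts M. aff M a c v \<ge> 0) \<and> is_facet M (face_of_aff M a c)"

definition levelness :: "'a matroid \<Rightarrow> nat" where
  "levelness M = (LEAST k. \<forall>a c. facet_defining M a c \<longrightarrow> card (aff M a c ` verts M) \<le> k)"

definition minimally_level :: "'a matroid \<Rightarrow> nat \<Rightarrow> bool" where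
  "minimally_level M k \<longleftrightarrow> levelness M = k \<and>
     (\<forall>N. matroid N \<and> proper_minor N M \<longrightarrow> levelness N < k)"

definition level_flacet :: "'a matroid \<Rightarrow> 'a set \<Rightarrow> nat \<Rightarrow> bool" where
  "level_flacet M F k \<longleftrightarrow> flacet M F \<and> card ((\<lambda>x. \<Sum>e\<in>F. x e) ` verts M) = k"

end

theory Submission
  imports Defs
begin

text \<open>
  Write \<open>E\<close> for the ground set and \<open>r\<close> for the rank. On the vertices of the base polytope the
  functional \<open>x(F)\<close> takes exactly the values between \<open>r(E) - r(E - F)\<close> and \<open>r(F)\<close>, so a
  \<open>k\<close>-level flacet has \<open>k = r(F) + r(E - F) - r(E) + 1\<close>. If \<open>k \<ge> 2\<close>, the inequality
  \<open>x(F) \<le> r(F)\<close> defines a facet: an affine function vanishing on its face is unchanged by the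
  basis exchanges inside the face, and since \<open>M|F\<close> and \<open>M/F\<close> are connected these exchanges
  make it constant on \<open>F\<close> and on \<open>E - F\<close>. So a matroid with a \<open>k\<close>-level flacet has
  levelness at least \<open>k\<close>.

  Let \<open>M\<close> be minimally \<open>k\<close>-level; the empty minor, of levelness 1, gives \<open>k \<ge> 2\<close>. If
  \<open>r(F) \<noteq> k - 1\<close> then \<open>r(E - F) < r(E)\<close>, so some \<open>e \<in> F\<close> lies outside the closure of
  \<open>E - F\<close>. By Tutte's theorem either \<open>M|(F - e)\<close> or \<open>(M|F)/e\<close> is connected, and accordingly
  \<open>F - e\<close> is a \<open>k\<close>-level flacet of the proper minor \<open>M \ e\<close> or \<open>M/e\<close>, which contradicts
  minimality.
\<close>

section \<open>Bases, independence and rank\<close>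

definition basis_of :: "'a matroid \<Rightarrow> 'a set \<Rightarrow> 'a set \<Rightarrow> bool" where
  "basis_of M S I \<longleftrightarrow> I \<subseteq> S \<and> indep M I \<and> (\<forall>J. I \<subset> J \<and> J \<subseteq> S \<longrightarrow> \<not> indep M J)"

lemma bases_restrict: "bases (restrict M S) = {I. basis_of M S I}"
  by (simp add: bases_def restrict_def basis_of_def)

lemma ground_restrict [simp]: "ground (restrict M S) = S"
  by (simp add: ground_def restrict_def)

lemma ground_contract [simp]: "ground (contract M S) = ground M - S"
  by (simp add: ground_def contract_def)

lemma bases_contract: "bases (contract M C) = {B - C | B. B \<in> bases M \<and> card (B \<inter> C) = rk M C}"
  by (simp add: bases_def contract_def)

lemma matroid_eqI: "ground X = ground Y \<Longrightarrow> bases X = bases Y \<Longrightarrow> X = Y"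
  by (simp add: ground_def bases_def prod_eq_iff)

locale basis_matroid =
  fixes M :: "'a matroid"
  assumes matroid: "matroid M"
begin

lemma finite_ground: "finite (ground M)"
  using matroid by (simp add: matroid_def)

lemma bases_nonempty: "bases M \<noteq> {}"
  using matroid by (simp add: matroid_def)

lemma basis_subset_ground: "B \<in> bases M \<Longrightarrow> B \<subseteq> ground M"
  using matroid by (simp add: matroid_def)

lemma finite_basis: "B \<in> bases M \<Longrightarrow> finite B"
  using basis_subset_ground finite_ground finite_subset by blast

lemma basis_exchange:
  "B1 \<in> bases M \<Longrightarrow> B2 \<in> bases M \<Longrightarrow> x \<in> B1 - B2 \<Longrightarrow> \<exists>y\<in>B2 - B1. insert y (B1 - {x}) \<in> bases M"
  using matroid by (simp add: matroid_def)

lemma finite_bases: "finite (bases M)"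
  using finite_ground basis_subset_ground by (blast intro: finite_subset[of _ "Pow (ground M)"])

lemma basis_exchange_induct [consumes 2, case_names target exchange]:
  assumes "B \<in> bases M" "B' \<in> bases M" and "P B'"
    and exchange: "\<And>B x y. B \<in> bases M \<Longrightarrow> x \<in> B - B' \<Longrightarrow> y \<in> B' - B \<Longrightarrow>
        insert y (B - {x}) \<in> bases M \<Longrightarrow> P (insert y (B - {x})) \<Longrightarrow> P B"
  shows "P B"
  using assms(1)
proof (induction "card (B - B')" arbitrary: B)
  case 0
  then have "B \<subseteq> B'"
    using finite_basis by auto
  moreover have "B' \<subseteq> B"
    using basis_exchange[OF assms(2) \<open>B \<in> bases M\<close>] \<open>B \<subseteq> B'\<close> by blast
  ultimately show ?case
    using \<open>P B'\<close> by simp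
next
  case (Suc n)
  then obtain x where x: "x \<in> B - B'"
    by (metis card.empty ex_in_conv nat.distinct(1))
  then obtain y where y: "y \<in> B' - B" "insert y (B - {x}) \<in> bases M"
    using basis_exchange[OF Suc.prems assms(2)] by blast
  have "insert y (B - {x}) - B' = (B - B') - {x}"
    using x y by auto
  then have "n = card (insert y (B - {x}) - B')"
    using Suc.hyps(2) x finite_basis[OF Suc.prems] by simp
  then show ?case
    using Suc.hyps(1) y exchange[OF Suc.prems x] by blast
qed

lemma basis_card: "B \<in> bases M \<Longrightarrow> B' \<in> bases M \<Longrightarrow> card B = card B'"
proof (induction rule: basis_exchange_induct)
  case (exchange B x y)
  then have "card (insert y (B - {x})) = card B"
    using finite_basis[of B] by (simp add: card_insert_disjoint card_Suc_Diff1 del: card_Diff_insert)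
  then show ?case
    using exchange.IH by simp
qed simp

lemma indep_subset_ground: "indep M I \<Longrightarrow> I \<subseteq> ground M"
  using basis_subset_ground by (auto simp: indep_def)

lemma finite_indep: "indep M I \<Longrightarrow> finite I"
  using indep_subset_ground finite_ground finite_subset by blast

lemma indep_subset: "indep M I \<Longrightarrow> J \<subseteq> I \<Longrightarrow> indep M J"
  by (auto simp: indep_def)

lemma basis_indep: "B \<in> bases M \<Longrightarrow> indep M B"
  by (auto simp: indep_def)

lemma indep_empty: "indep M {}"
  using bases_nonempty by (auto simp: indep_def)

lemma indep_card_basis: "indep M I \<Longrightarrow> B \<in> bases M \<Longrightarrow> card I = card B \<Longrightarrow> I \<in> bases M"
  unfolding indep_def by (metis basis_card card_subset_eq finite_basis)

lemma basis_between:
  assumes "indep M I" "B \<in> bases M"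
  shows "\<exists>B'\<in>bases M. I \<subseteq> B' \<and> B' \<subseteq> I \<union> B"
proof -
  have "\<exists>B'\<in>bases M. I \<subseteq> B' \<and> B' \<subseteq> I \<union> B" if "B0 \<in> bases M" "I \<subseteq> B0" for B0
    using that
  proof (induction "card (B0 - (I \<union> B))" arbitrary: B0)
    case 0
    then show ?case
      using finite_basis[of B0] by auto
  next
    case (Suc n)
    then obtain x where x: "x \<in> B0 - (I \<union> B)"
      by (metis card.empty ex_in_conv nat.distinct(1))
    then obtain y where y: "y \<in> B - B0" "insert y (B0 - {x}) \<in> bases M"
      using basis_exchange[OF Suc.prems(1) assms(2)] by blast
    have "insert y (B0 - {x}) - (I \<union> B) = (B0 - (I \<union> B)) - {x}"
      using x y by auto
    then have "n = card (insert y (B0 - {x}) - (I \<union> B))"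
      using Suc.hyps(2) x finite_basis[OF Suc.prems(1)] by simp
    moreover have "I \<subseteq> insert y (B0 - {x})"
      using Suc.prems(2) x by auto
    ultimately show ?case
      using Suc.hyps(1) y(2) by blast
  qed
  then show ?thesis
    using assms(1) by (auto simp: indep_def)
qed

lemma indep_augment:
  assumes I: "indep M I" and J: "indep M J" and card: "card I < card J"
  shows "\<exists>y\<in>J - I. indep M (insert y I)"
proof (rule ccontr)
  assume no_aug: "\<not> ?thesis"
  obtain BJ where BJ: "BJ \<in> bases M" "J \<subseteq> BJ"
    using J by (auto simp: indep_def)
  obtain B where B: "B \<in> bases M" "I \<subseteq> B" "B \<subseteq> I \<union> BJ"
    using basis_between[OF I BJ(1)] by blast
  have "B \<inter> (J - I) = {}"
    using no_aug B(1,2) by (auto simp: indep_def)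
  then have "B \<subseteq> I \<union> (BJ - J)"
    using B(3) by auto
  moreover have "finite BJ"
    using finite_basis[OF BJ(1)] .
  ultimately have "card B \<le> card I + card (BJ - J)"
    by (meson card_Un_le card_mono finite_Diff finite_Un finite_indep[OF I] order_trans)
  also have "\<dots> < card BJ"
    using card BJ(2) \<open>finite BJ\<close> card_mono[OF \<open>finite BJ\<close> BJ(2)]
    by (simp add: card_Diff_subset finite_subset)
  finally show False
    using basis_card[OF B(1) BJ(1)] by simp
qed

lemma card_basis_Int_le_rk: "B \<in> bases M \<Longrightarrow> card (B \<inter> A) \<le> rk M A"
  unfolding rk_def using finite_bases by (intro Max_ge) auto

lemma rk_attained: "\<exists>B\<in>bases M. card (B \<inter> A) = rk M A"
proof -
  have "rk M A \<in> (\<lambda>B. card (B \<inter> A)) ` bases M"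
    unfolding rk_def using finite_bases bases_nonempty by (intro Max_in) auto
  then show ?thesis
    by auto
qed

lemma indep_card_le_rk: "indep M I \<Longrightarrow> I \<subseteq> A \<Longrightarrow> card I \<le> rk M A"
  unfolding indep_def
  by (meson card_basis_Int_le_rk card_mono finite_Int finite_basis le_inf_iff order_trans order_refl)

lemma indep_of_card_rk: "\<exists>I. indep M I \<and> I \<subseteq> A \<and> card I = rk M A"
  using rk_attained by (meson basis_indep indep_subset inf_le1 inf_le2)

lemma basis_of_iff: "basis_of M A I \<longleftrightarrow> indep M I \<and> I \<subseteq> A \<and> card I = rk M A"
proof
  assume I: "basis_of M A I"
  obtain K where K: "indep M K" "K \<subseteq> A" "card K = rk M A"
    using indep_of_card_rk by blast
  have "\<not> card I < card K"
    using indep_augment[of I K] I K unfolding basis_of_def by blast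
  then show "indep M I \<and> I \<subseteq> A \<and> card I = rk M A"
    using I K indep_card_le_rk[of I A] unfolding basis_of_def by auto
next
  assume "indep M I \<and> I \<subseteq> A \<and> card I = rk M A"
  then show "basis_of M A I"
    unfolding basis_of_def
    by (metis finite_indep indep_card_le_rk leD psubset_card_mono)
qed

lemma basis_of_extend:
  assumes "indep M I" "I \<subseteq> A"
  shows "\<exists>K. basis_of M A K \<and> I \<subseteq> K"
  using assms
proof (induction "rk M A - card I" arbitrary: I)
  case 0
  then show ?case
    using indep_card_le_rk basis_of_iff by (metis diff_is_0_eq le_antisym order_refl)
next
  case (Suc n)
  obtain K where K: "indep M K" "K \<subseteq> A" "card K = rk M A"
    using indep_of_card_rk by blast
  moreover have "card I < card K"
    using Suc.hyps(2) K(3) by linarith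
  ultimately obtain y where y: "y \<in> K - I" "indep M (insert y I)"
    using indep_augment[OF Suc.prems(1) K(1)] by blast
  have "n = rk M A - card (insert y I)"
    using Suc.hyps(2) y finite_indep[OF Suc.prems(1)] by simp
  then show ?case
    using Suc.hyps(1)[of "insert y I"] y K(2) Suc.prems(2) by blast
qed

lemma basis_of_exists: "\<exists>K. basis_of M A K"
  using basis_of_extend[OF indep_empty] by blast

lemma basis_of_card: "basis_of M A I \<Longrightarrow> card I = rk M A"
  using basis_of_iff by blast

lemma basis_of_indep: "basis_of M A I \<Longrightarrow> indep M I"
  by (simp add: basis_of_def)

lemma basis_of_subset: "basis_of M A I \<Longrightarrow> I \<subseteq> A"
  by (simp add: basis_of_def)

lemma basis_of_Int_eq: "basis_of M C J \<Longrightarrow> indep M K \<Longrightarrow> J \<subseteq> K \<Longrightarrow> K \<inter> C = J"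
  unfolding basis_of_def by (metis indep_subset inf_le1 inf_le2 le_inf_iff psubsetI)

lemma rk_mono: "A \<subseteq> A' \<Longrightarrow> rk M A \<le> rk M A'"
  by (metis indep_card_le_rk indep_of_card_rk order_trans)

lemma rk_le_card: "finite A \<Longrightarrow> rk M A \<le> card A"
  by (metis card_mono indep_of_card_rk)

lemma rk_empty [simp]: "rk M {} = 0"
  using rk_le_card[of "{}"] by simp

lemma rk_singleton_le: "rk M {e} \<le> 1"
  using rk_le_card[of "{e}"] by simp

lemma indep_singleton_iff_rk: "indep M {e} \<longleftrightarrow> rk M {e} = 1"
proof
  assume "indep M {e}"
  then show "rk M {e} = 1"
    using indep_card_le_rk[of "{e}" "{e}"] rk_singleton_le[of e] by simp
next
  assume "rk M {e} = 1"
  then obtain I where I: "indep M I" "I \<subseteq> {e}" "card I = 1"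
    using indep_of_card_rk[of "{e}"] by auto
  then have "I = {e}"
    by (auto simp: subset_singleton_iff)
  then show "indep M {e}"
    using I(1) by simp
qed

lemma rk_ground: "B \<in> bases M \<Longrightarrow> rk M (ground M) = card B"
  by (metis basis_card basis_subset_ground inf.absorb1 rk_attained)

lemma indep_card_rk_basis: "indep M I \<Longrightarrow> card I = rk M (ground M) \<Longrightarrow> I \<in> bases M"
  using bases_nonempty rk_ground indep_card_basis by (metis ex_in_conv)

lemma rk_submod: "rk M (A \<union> B) + rk M (A \<inter> B) \<le> rk M A + rk M B"
proof -
  obtain I where I: "basis_of M (A \<inter> B) I"
    using basis_of_exists by blast
  then obtain K where K: "basis_of M (A \<union> B) K" "I \<subseteq> K"
    using basis_of_extend[OF basis_of_indep[OF I]] basis_of_subset[OF I] by blast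
  have K_indep: "indep M K" and "finite K"
    using K basis_of_indep finite_indep by blast+
  have "card K + card (K \<inter> A \<inter> B) = card (K \<inter> A) + card (K \<inter> B)"
    using card_Un_Int[of "K \<inter> A" "K \<inter> B"] \<open>finite K\<close> basis_of_subset[OF K(1)]
    by (simp add: Int_Un_distrib[symmetric] Int_absorb2 Int_assoc Int_left_commute)
  moreover have "card (K \<inter> A) \<le> rk M A" "card (K \<inter> B) \<le> rk M B"
    using K_indep by (auto intro: indep_card_le_rk indep_subset)
  moreover have "card I \<le> card (K \<inter> A \<inter> B)"
    using K(2) basis_of_subset[OF I] \<open>finite K\<close> by (intro card_mono) auto
  ultimately show ?thesis
    using basis_of_card[OF K(1)] basis_of_card[OF I] by linarith
qed

lemma rk_Un_le: "rk M (A \<union> B) \<le> rk M A + rk M B"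
  using rk_submod[of A B] by linarith

lemma rk_ground_le_compl: "A \<subseteq> ground M \<Longrightarrow> rk M (ground M) \<le> rk M A + rk M (ground M - A)"
  using rk_Un_le[of A "ground M - A"] by (simp add: Un_absorb1)

section \<open>Restriction and contraction\<close>

lemma bases_restrict_card: "bases (restrict M S) = {I. indep M I \<and> I \<subseteq> S \<and> card I = rk M S}"
  using basis_of_iff by (auto simp: bases_restrict)

lemma matroid_restrict:
  assumes "S \<subseteq> ground M"
  shows "matroid (restrict M S)"
  unfolding matroid_def
proof (intro conjI ballI)
  show "finite (ground (restrict M S))"
    using assms finite_ground finite_subset by auto
  show "bases (restrict M S) \<noteq> {}"
    using basis_of_exists by (auto simp: bases_restrict)
  show "B \<subseteq> ground (restrict M S)" if "B \<in> bases (restrict M S)" for B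
    using that bases_restrict_card by auto
  fix B1 B2 x
  assume B1: "B1 \<in> bases (restrict M S)" and B2: "B2 \<in> bases (restrict M S)" and x: "x \<in> B1 - B2"
  have "finite B1" "card B1 = card B2"
    using B1 B2 finite_indep bases_restrict_card by auto
  then have "card (B1 - {x}) < card B2"
    using x by (metis DiffD1 card_Diff1_less)
  moreover have "indep M (B1 - {x})" "indep M B2"
    using B1 B2 bases_restrict_card indep_subset by auto
  ultimately obtain y where y: "y \<in> B2 - (B1 - {x})" "indep M (insert y (B1 - {x}))"
    using indep_augment by blast
  have "y \<noteq> x"
    using x y by auto
  then have "card (insert y (B1 - {x})) = card B1"
    using x y \<open>finite B1\<close> by (simp add: card_insert_disjoint card_Suc_Diff1 del: card_Diff_insert)
  then have "insert y (B1 - {x}) \<in> bases (restrict M S)"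
    using y B1 B2 bases_restrict_card by auto
  then show "\<exists>y\<in>B2 - B1. insert y (B1 - {x}) \<in> bases (restrict M S)"
    using y \<open>y \<noteq> x\<close> by blast
qed

lemma indep_restrict: "indep (restrict M S) I \<longleftrightarrow> indep M I \<and> I \<subseteq> S"
proof
  assume "indep (restrict M S) I"
  then obtain K where "basis_of M S K" "I \<subseteq> K"
    unfolding indep_def bases_restrict by auto
  then show "indep M I \<and> I \<subseteq> S"
    using basis_of_indep basis_of_subset indep_subset by blast
next
  assume "indep M I \<and> I \<subseteq> S"
  then obtain K where "basis_of M S K" "I \<subseteq> K"
    using basis_of_extend by blast
  then show "indep (restrict M S) I"
    unfolding indep_def bases_restrict by blast
qed

lemma rk_restrict:
  assumes "S \<subseteq> ground M" "A \<subseteq> S"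
  shows "rk (restrict M S) A = rk M A"
proof -
  interpret R: basis_matroid "restrict M S"
    using matroid_restrict[OF assms(1)] by unfold_locales
  show ?thesis
    using R.indep_of_card_rk[of A] R.indep_card_le_rk indep_of_card_rk[of A] indep_card_le_rk
      indep_restrict assms(2)
    by (metis le_antisym order_trans)
qed

lemma restrict_restrict:
  assumes "T \<subseteq> S"
  shows "restrict (restrict M S) T = restrict M T"
proof (rule matroid_eqI)
  have "basis_of (restrict M S) T I \<longleftrightarrow> basis_of M T I" for I
    using assms unfolding basis_of_def indep_restrict by blast
  then show "bases (restrict (restrict M S) T) = bases (restrict M T)"
    unfolding bases_restrict by blast
qed simp

lemma restrict_ground: "restrict M (ground M) = M"
proof (rule matroid_eqI)
  show "bases (restrict M (ground M)) = bases M"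
    using indep_card_rk_basis basis_indep basis_subset_ground rk_ground
    by (auto simp: bases_restrict_card)
qed simp

lemma basis_replace_part:
  assumes B: "B \<in> bases M" and "basis_of M C (B \<inter> C)" and J: "basis_of M C J"
  shows "(B - C) \<union> J \<in> bases M"
proof -
  obtain B' where B': "B' \<in> bases M" "J \<subseteq> B'" "B' \<subseteq> J \<union> B"
    using basis_between[OF basis_of_indep[OF J] B] by blast
  have "B' \<inter> C = J"
    using basis_of_Int_eq[OF J basis_indep[OF B'(1)] B'(2)] .
  then have "B' \<subseteq> (B - C) \<union> J"
    using B'(3) by blast
  moreover have "card ((B - C) \<union> J) \<le> card B"
    using card_Un_le[of "B - C" J] card_Int_Diff[OF finite_basis[OF B], of C]
      basis_of_card[OF J] basis_of_card[OF assms(2)] by linarith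
  ultimately show ?thesis
    using basis_card[OF B B'(1)] finite_basis[OF B] finite_indep[OF basis_of_indep[OF J]] B'(1)
    by (metis card_seteq finite_Diff finite_UnI)
qed

lemma bases_contract_basis_of:
  assumes J: "basis_of M C J"
  shows "bases (contract M C) = {I. I \<inter> C = {} \<and> I \<union> J \<in> bases M}"
proof safe
  fix B
  assume "B \<in> bases (contract M C)"
  then obtain B0 where B0: "B = B0 - C" "B0 \<in> bases M" "card (B0 \<inter> C) = rk M C"
    unfolding bases_contract by blast
  then have "basis_of M C (B0 \<inter> C)"
    unfolding basis_of_iff using indep_subset[OF basis_indep[OF B0(2)]] by blast
  then show "B \<union> J \<in> bases M"
    using basis_replace_part[OF B0(2) _ J] B0(1) by simp
  fix x
  assume "x \<in> B" "x \<in> C"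
  then show "x \<in> {}"
    using B0 by auto
next
  fix I
  assume I: "I \<inter> C = {}" "I \<union> J \<in> bases M"
  have "(I \<union> J) \<inter> C = J" "(I \<union> J) - C = I"
    using I basis_of_subset[OF J] by auto
  then show "I \<in> bases (contract M C)"
    unfolding bases_contract using I(2) basis_of_card[OF J] by (metis (mono_tags, lifting) mem_Collect_eq)
qed

lemma indep_contract:
  assumes J: "basis_of M C J"
  shows "indep (contract M C) I \<longleftrightarrow> I \<inter> C = {} \<and> indep M (I \<union> J)"
proof
  assume "indep (contract M C) I"
  then show "I \<inter> C = {} \<and> indep M (I \<union> J)"
    unfolding indep_def[of "contract M C"] bases_contract_basis_of[OF J]
    by (auto intro: indep_subset[OF basis_indep])
next
  assume I: "I \<inter> C = {} \<and> indep M (I \<union> J)"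
  then obtain B where B: "B \<in> bases M" "I \<union> J \<subseteq> B"
    unfolding indep_def by blast
  then have "B \<inter> C = J"
    using basis_of_Int_eq[OF J basis_indep[OF B(1)]] by blast
  then have "B - C \<in> bases (contract M C)"
    using B(1) bases_contract_basis_of[OF J] by (auto simp: Un_Diff_Int)
  moreover have "I \<subseteq> B - C"
    using I B by auto
  ultimately show "indep (contract M C) I"
    unfolding indep_def by blast
qed

lemma matroid_contract: "matroid (contract M C)"
  unfolding matroid_def
proof (intro conjI ballI)
  obtain J where J: "basis_of M C J"
    using basis_of_exists by blast
  show "finite (ground (contract M C))"
    using finite_ground by simp
  obtain B where B: "B \<in> bases M" "J \<subseteq> B"
    using basis_of_indep[OF J] unfolding indep_def by blast
  then have "B - C \<in> bases (contract M C)"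
    using basis_of_Int_eq[OF J basis_indep[OF B(1)] B(2)] bases_contract_basis_of[OF J]
    by (auto simp: Un_Diff_Int)
  then show "bases (contract M C) \<noteq> {}"
    by blast
  show "B \<subseteq> ground (contract M C)" if "B \<in> bases (contract M C)" for B
    using that bases_contract_basis_of[OF J] basis_subset_ground by auto
  fix B1 B2 x
  assume B1: "B1 \<in> bases (contract M C)" and B2: "B2 \<in> bases (contract M C)" and x: "x \<in> B1 - B2"
  have B1': "B1 \<inter> C = {}" "B1 \<union> J \<in> bases M" and B2': "B2 \<inter> C = {}" "B2 \<union> J \<in> bases M"
    using B1 B2 bases_contract_basis_of[OF J] by auto
  have "x \<notin> J"
    using B1'(1) x basis_of_subset[OF J] by auto
  then obtain y where y: "y \<in> (B2 \<union> J) - (B1 \<union> J)" "insert y ((B1 \<union> J) - {x}) \<in> bases M"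
    using basis_exchange[OF B1'(2) B2'(2)] x by blast
  moreover have "insert y ((B1 \<union> J) - {x}) = insert y (B1 - {x}) \<union> J"
    using \<open>x \<notin> J\<close> by auto
  ultimately have "insert y (B1 - {x}) \<in> bases (contract M C)"
    using B1'(1) B2'(1) bases_contract_basis_of[OF J] by auto
  then show "\<exists>y\<in>B2 - B1. insert y (B1 - {x}) \<in> bases (contract M C)"
    using y by blast
qed

lemma rk_contract:
  assumes "A \<inter> C = {}"
  shows "rk (contract M C) A = rk M (A \<union> C) - rk M C"
proof -
  interpret N: basis_matroid "contract M C"
    using matroid_contract by unfold_locales
  obtain J where J: "basis_of M C J"
    using basis_of_exists by blast
  obtain K where K: "basis_of M (A \<union> C) K" "J \<subseteq> K"
    using basis_of_extend[OF basis_of_indep[OF J]] basis_of_subset[OF J] by blast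
  have "K \<inter> C = J"
    using basis_of_Int_eq[OF J basis_of_indep[OF K(1)] K(2)] .
  then have card_K: "card K = card (K - C) + card J"
    using card_Int_Diff[of K C] finite_indep[OF basis_of_indep[OF K(1)]] by simp
  have "card (K - C) \<le> rk (contract M C) A"
  proof (rule N.indep_card_le_rk)
    show "indep (contract M C) (K - C)"
    proof -
      have "(K - C) \<union> J = K"
        using \<open>K \<inter> C = J\<close> by auto
      then show ?thesis
        using indep_contract[OF J] basis_of_indep[OF K(1)] by auto
    qed
    show "K - C \<subseteq> A"
      using basis_of_subset[OF K(1)] by auto
  qed
  moreover have "rk (contract M C) A \<le> card (K - C)"
  proof -
    obtain I where I: "indep (contract M C) I" "I \<subseteq> A" "card I = rk (contract M C) A"
      using N.indep_of_card_rk by blast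
    then have "I \<inter> C = {}" "indep M (I \<union> J)"
      using indep_contract[OF J] by auto
    then have "card I + card J \<le> rk M (A \<union> C)"
      using indep_card_le_rk[of "I \<union> J" "A \<union> C"] I(2) basis_of_subset[OF J]
        card_Un_disjoint[of I J] finite_indep by (metis Un_mono disjoint_iff finite_Un subsetD)
    then show ?thesis
      using I(3) card_K basis_of_card[OF K(1)] by linarith
  qed
  ultimately show ?thesis
    using card_K basis_of_card[OF K(1)] basis_of_card[OF J] by linarith
qed

lemma contract_empty: "contract M {} = M"
  by (rule matroid_eqI) (auto simp: bases_contract rk_empty)

section \<open>Connectivity\<close>

lemma card_basis_split: "B \<in> bases M \<Longrightarrow> card (B \<inter> A) + card (B \<inter> (ground M - A)) = rk M (ground M)"
proof -
  assume B: "B \<in> bases M"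
  then have "B \<inter> (ground M - A) = B - A"
    using basis_subset_ground by auto
  then show ?thesis
    using card_Int_Diff[OF finite_basis[OF B], of A] rk_ground[OF B] by simp
qed

lemma bases_direct_sum_if_rk_additive:
  assumes S: "S \<subseteq> ground M" and rk_sum: "rk M S + rk M (ground M - S) = rk M (ground M)"
  shows "bases M = {B1 \<union> B2 | B1 B2. B1 \<in> bases (restrict M S) \<and> B2 \<in> bases (restrict M (ground M - S))}"
proof -
  have tight: "card (B \<inter> S) = rk M S" "card (B \<inter> (ground M - S)) = rk M (ground M - S)"
    if "B \<in> bases M" for B
    using card_basis_split[OF that, of S] card_basis_Int_le_rk[OF that, of S]
      card_basis_Int_le_rk[OF that, of "ground M - S"] rk_sum by linarith+
  show ?thesis
  proof safe
    fix B
    assume B: "B \<in> bases M"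
    then have "B \<inter> S \<in> bases (restrict M S)" "B \<inter> (ground M - S) \<in> bases (restrict M (ground M - S))"
      using tight[OF B] indep_subset[OF basis_indep[OF B]] by (auto simp: bases_restrict_card)
    moreover have "B = (B \<inter> S) \<union> (B \<inter> (ground M - S))"
      using basis_subset_ground[OF B] by auto
    ultimately show "\<exists>B1 B2. B = B1 \<union> B2 \<and> B1 \<in> bases (restrict M S) \<and> B2 \<in> bases (restrict M (ground M - S))"
      by blast
  next
    fix B1 B2
    assume B1: "B1 \<in> bases (restrict M S)" and B2: "B2 \<in> bases (restrict M (ground M - S))"
    obtain B where B: "B \<in> bases M" "B2 \<subseteq> B"
      using B2 by (auto simp: bases_restrict_card indep_def)
    have "B \<inter> (ground M - S) = B2"
      using B2 B tight(2)[OF B(1)] finite_basis[OF B(1)]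
      by (intro card_seteq[symmetric]) (auto simp: bases_restrict_card)
    then have "B - S = B2"
      using basis_subset_ground[OF B(1)] by auto
    moreover have "basis_of M S (B \<inter> S)" "basis_of M S B1"
      using tight(1)[OF B(1)] indep_subset[OF basis_indep[OF B(1)]] B1
      by (auto simp: basis_of_iff bases_restrict_card)
    then have "(B - S) \<union> B1 \<in> bases M"
      using basis_replace_part[OF B(1)] by blast
    ultimately show "B1 \<union> B2 \<in> bases M"
      by (simp add: Un_commute)
  qed
qed

lemma separator_iff_rk:
  assumes S: "S \<subseteq> ground M"
  shows "bases M = {B1 \<union> B2 | B1 B2. B1 \<in> bases (restrict M S) \<and> B2 \<in> bases (restrict M (ground M - S))}
     \<longleftrightarrow> rk M S + rk M (ground M - S) = rk M (ground M)"
    (is "bases M = ?sums \<longleftrightarrow> _")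
proof
  assume sums: "bases M = ?sums"
  obtain B where "B \<in> bases M"
    using bases_nonempty by blast
  then obtain B1 B2 where B: "B = B1 \<union> B2" "B1 \<in> bases (restrict M S)" "B2 \<in> bases (restrict M (ground M - S))"
    using sums by blast
  then have "B \<inter> S = B1" "B \<inter> (ground M - S) = B2"
    by (auto simp: bases_restrict_card)
  then show "rk M S + rk M (ground M - S) = rk M (ground M)"
    using card_basis_split[OF \<open>B \<in> bases M\<close>, of S] B(2,3) by (simp add: bases_restrict_card)
qed (rule bases_direct_sum_if_rk_additive[OF S])

lemma connected_iff_rk:
  "connected M \<longleftrightarrow>
     (\<forall>S. S \<noteq> {} \<and> S \<subset> ground M \<longrightarrow> rk M S + rk M (ground M - S) \<noteq> rk M (ground M))"
  unfolding connected_def using separator_iff_rk[OF psubset_imp_subset] by (intro iffI) meson+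

lemma connected_rk_gt:
  assumes "connected M" "S \<noteq> {}" "S \<subset> ground M"
  shows "rk M (ground M) < rk M S + rk M (ground M - S)"
proof -
  have "rk M S + rk M (ground M - S) \<noteq> rk M (ground M)"
    using assms connected_iff_rk by blast
  then show ?thesis
    using rk_ground_le_compl[of S] assms(3) by fastforce
qed

lemma separator_if_exchange_closed:
  assumes closed: "\<And>B x y. B \<in> bases M \<Longrightarrow> x \<in> B \<Longrightarrow> y \<in> ground M - B \<Longrightarrow>
      insert y (B - {x}) \<in> bases M \<Longrightarrow> x \<in> S \<longleftrightarrow> y \<in> S"
  shows "rk M S + rk M (ground M - S) = rk M (ground M)"
proof -
  obtain B0 where B0: "B0 \<in> bases M"
    using bases_nonempty by blast
  have same_meet: "card (B \<inter> S) = card (B0 \<inter> S)" if "B \<in> bases M" for B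
    using that B0
  proof (induction rule: basis_exchange_induct)
    case (exchange B x y)
    have "x \<in> S \<longleftrightarrow> y \<in> S"
      using closed[OF exchange(1)] exchange(2-4) basis_subset_ground[OF B0] by blast
    then have "card (insert y (B - {x}) \<inter> S) = card (B \<inter> S)"
    proof (cases "x \<in> S")
      case True
      then have "insert y (B - {x}) \<inter> S = insert y ((B \<inter> S) - {x})"
        using \<open>x \<in> S \<longleftrightarrow> y \<in> S\<close> by auto
      moreover have "y \<notin> (B \<inter> S) - {x}" "x \<in> B \<inter> S"
        using exchange(2,3) True by auto
      ultimately show ?thesis
        using finite_basis[OF exchange(1)] card_Suc_Diff1[of "B \<inter> S" x]
        by (simp del: card_Diff_insert)
    next
      case False
      then have "insert y (B - {x}) \<inter> S = B \<inter> S"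
        using \<open>x \<in> S \<longleftrightarrow> y \<in> S\<close> by auto
      then show ?thesis
        by simp
    qed
    then show ?case
      using exchange.IH by simp
  qed simp
  obtain B1 where "B1 \<in> bases M" "card (B1 \<inter> S) = rk M S"
    using rk_attained by blast
  moreover obtain B2 where "B2 \<in> bases M" "card (B2 \<inter> (ground M - S)) = rk M (ground M - S)"
    using rk_attained by blast
  ultimately show ?thesis
    using card_basis_split[of B2 S] same_meet by simp
qed

lemma connected_exchange_invariant:
  assumes conn: "connected M"
    and invariant: "\<And>B x y. B \<in> bases M \<Longrightarrow> x \<in> B \<Longrightarrow> y \<in> ground M - B \<Longrightarrow>
      insert y (B - {x}) \<in> bases M \<Longrightarrow> f x = f y"
    and x: "x \<in> ground M" and y: "y \<in> ground M"
  shows "f x = f y"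
proof (rule ccontr)
  assume "f x \<noteq> f y"
  define S where "S = {z \<in> ground M. f z = f x}"
  have "S \<noteq> {}"
    using x by (auto simp: S_def)
  moreover have "S \<subset> ground M"
  proof (rule psubsetI)
    show "S \<subseteq> ground M"
      by (simp add: S_def)
    have "y \<notin> S"
      using \<open>f x \<noteq> f y\<close> by (simp add: S_def)
    then show "S \<noteq> ground M"
      using y by blast
  qed
  ultimately have "rk M (ground M) < rk M S + rk M (ground M - S)"
    by (rule connected_rk_gt[OF conn])
  moreover have "rk M S + rk M (ground M - S) = rk M (ground M)"
  proof (rule separator_if_exchange_closed)
    fix B x' y'
    assume "B \<in> bases M" "x' \<in> B" "y' \<in> ground M - B" "insert y' (B - {x'}) \<in> bases M"
    then show "x' \<in> S \<longleftrightarrow> y' \<in> S"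
      using invariant[of B x' y'] basis_subset_ground[of B] by (auto simp: S_def)
  qed
  ultimately show False
    by simp
qed

lemma separators_delete_contract_cross:
  assumes conn: "connected M" and e: "e \<in> ground M"
    and P: "P \<subseteq> ground M - {e}" and Q: "Q \<subseteq> ground M - {e}"
    and sep_P: "rk M P + rk M (ground M - {e} - P) = rk M (ground M - {e})"
    and sep_Q: "rk M (Q \<union> {e}) + rk M ((ground M - {e} - Q) \<union> {e}) = rk M (ground M) + rk M {e}"
  shows "P \<inter> Q = {} \<or> (ground M - {e} - P) \<inter> (ground M - {e} - Q) = {}"
proof (rule ccontr)
  let ?E = "ground M - {e}"
  let ?P' = "?E - P" and ?Q' = "?E - Q"
  assume "\<not> ?thesis"
  then have PQ: "P \<inter> Q \<noteq> {}" and PQ': "?P' \<inter> ?Q' \<noteq> {}"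
    by auto
  have "ground M - (P \<union> (Q \<union> {e})) = ?P' \<inter> ?Q'" "P \<inter> (Q \<union> {e}) = P \<inter> Q"
    "P \<union> (Q \<union> {e}) \<subset> ground M"
    using P Q e PQ' by auto
  then have gt1: "rk M (ground M) < rk M (P \<union> (Q \<union> {e})) + rk M (?P' \<inter> ?Q')"
    and sub1: "rk M (P \<union> (Q \<union> {e})) + rk M (P \<inter> Q) \<le> rk M P + rk M (Q \<union> {e})"
    using connected_rk_gt[OF conn, of "P \<union> (Q \<union> {e})"] rk_submod[of P "Q \<union> {e}"] by auto
  have "ground M - (?P' \<union> (?Q' \<union> {e})) = P \<inter> Q" "?P' \<inter> (?Q' \<union> {e}) = ?P' \<inter> ?Q'"
    "?P' \<union> (?Q' \<union> {e}) \<subset> ground M"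
    using P Q e PQ by auto
  then have gt2: "rk M (ground M) < rk M (?P' \<union> (?Q' \<union> {e})) + rk M (P \<inter> Q)"
    and sub2: "rk M (?P' \<union> (?Q' \<union> {e})) + rk M (?P' \<inter> ?Q') \<le> rk M ?P' + rk M (?Q' \<union> {e})"
    using connected_rk_gt[OF conn, of "?P' \<union> (?Q' \<union> {e})"] rk_submod[of ?P' "?Q' \<union> {e}"]
    by auto
  \<comment> \<open>Summing up: \<open>r(E) + 2 \<le> r(E - e) + r(e) \<le> r(E) + 1\<close>.\<close>
  show False
    using gt1 sub1 gt2 sub2 sep_P sep_Q rk_singleton_le[of e] rk_mono[OF Diff_subset, of "ground M" "{e}"]
    by linarith
qed

theorem connected_delete_or_contract:
  assumes conn: "connected M" and e: "e \<in> ground M"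
  shows "connected (restrict M (ground M - {e})) \<or> connected (contract M {e})"
proof (rule ccontr)
  let ?E = "ground M - {e}"
  assume "\<not> ?thesis"
  then have not_D: "\<not> connected (restrict M ?E)" and not_C: "\<not> connected (contract M {e})"
    by auto
  interpret D: basis_matroid "restrict M ?E"
    using matroid_restrict[of ?E] by unfold_locales auto
  interpret C: basis_matroid "contract M {e}"
    using matroid_contract by unfold_locales
  obtain X1 where X1: "X1 \<noteq> {}" "X1 \<subset> ?E"
    and "rk (restrict M ?E) X1 + rk (restrict M ?E) (?E - X1) = rk (restrict M ?E) ?E"
    using not_D unfolding D.connected_iff_rk by auto
  then have sep1: "rk M X1 + rk M (?E - X1) = rk M ?E"
    by (simp add: rk_restrict Diff_subset psubset_imp_subset)
  obtain X2 where X2: "X2 \<noteq> {}" "X2 \<subset> ?E"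
    and sep2_C: "rk (contract M {e}) X2 + rk (contract M {e}) (?E - X2) = rk (contract M {e}) ?E"
    using not_C unfolding C.connected_iff_rk by auto
  have rk_C: "rk (contract M {e}) A = rk M (A \<union> {e}) - rk M {e}"
    and rk_e_le: "rk M {e} \<le> rk M (A \<union> {e})" if "A \<subseteq> ?E" for A
    using rk_contract[of A "{e}"] rk_mono[of "{e}" "A \<union> {e}"] that by auto
  have "?E \<union> {e} = ground M"
    using e by auto
  then have "rk (contract M {e}) ?E = rk M (ground M) - rk M {e}" "rk M {e} \<le> rk M (ground M)"
    using rk_C[of ?E] rk_e_le[of ?E] by simp_all
  moreover have "X2 \<subseteq> ?E" "?E - X2 \<subseteq> ?E"
    using X2 by auto
  ultimately have sep2: "rk M (X2 \<union> {e}) + rk M ((?E - X2) \<union> {e}) = rk M (ground M) + rk M {e}"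
    using sep2_C rk_C[of X2] rk_C[of "?E - X2"] rk_e_le[of X2] rk_e_le[of "?E - X2"] by linarith
  have X2_compl: "?E - (?E - X2) = X2" "?E - X2 \<subseteq> ?E"
    using X2 by auto
  have "X1 \<inter> X2 = {} \<or> (?E - X1) \<inter> (?E - X2) = {}"
    using separators_delete_contract_cross[OF conn e _ _ sep1 sep2] X1 X2 by blast
  moreover have "X1 \<inter> (?E - X2) = {} \<or> (?E - X1) \<inter> X2 = {}"
    using separators_delete_contract_cross[OF conn e _ X2_compl(2) sep1] sep2 X1(2)
    unfolding X2_compl(1) by (simp add: add.commute)
  ultimately show False
    using X1 X2 by blast
qed

end

section \<open>The face of a flacet\<close>

text \<open>The values of \<open>x \<mapsto> \<Sum>e\<in>F. x e\<close> on the vertices, and the bases whose vertices lie on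
  the face where it attains its maximum \<open>rk M F\<close>.\<close>

definition level_values :: "'a matroid \<Rightarrow> 'a set \<Rightarrow> nat set" where
  "level_values M F = (\<lambda>B. card (B \<inter> F)) ` bases M"

definition tight_bases :: "'a matroid \<Rightarrow> 'a set \<Rightarrow> 'a set set" where
  "tight_bases M F = {B \<in> bases M. card (B \<inter> F) = rk M F}"

lemma exchange_coeff_eq:
  fixes a :: "'a \<Rightarrow> real"
  assumes "finite U" "x \<in> U" "y \<notin> U"
    and "(\<Sum>e\<in>U. a e) + c = 0" "(\<Sum>e\<in>insert y (U - {x}). a e) + c = 0"
  shows "a x = a y"
proof -
  have "(\<Sum>e\<in>insert y (U - {x}). a e) = (\<Sum>e\<in>U. a e) - a x + a y"
    using assms(1-3) by (simp add: sum_diff1)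
  then show ?thesis
    using assms(4,5) by simp
qed

context basis_matroid
begin

lemma level_values_between:
  assumes "B \<in> bases M" "B' \<in> bases M"
  shows "{min (card (B \<inter> F)) (card (B' \<inter> F)) .. max (card (B \<inter> F)) (card (B' \<inter> F))} \<subseteq> level_values M F"
  using assms
proof (induction rule: basis_exchange_induct)
  case target
  then show ?case
    using assms(2) by (auto simp: level_values_def)
next
  case (exchange B x y)
  let ?B1 = "insert y (B - {x})"
  have fin: "finite (B \<inter> F)" "finite (?B1 \<inter> F)"
    using finite_basis[OF exchange(1)] finite_basis[OF exchange(4)] by auto
  have "card (?B1 \<inter> F) \<le> card (insert y (B \<inter> F))"
    using fin by (intro card_mono) auto
  also have "\<dots> \<le> Suc (card (B \<inter> F))"
    using fin by (simp add: card_insert_if)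
  finally have up: "card (?B1 \<inter> F) \<le> Suc (card (B \<inter> F))" .
  have "card (B \<inter> F) \<le> card (insert x (?B1 \<inter> F))"
    using fin by (intro card_mono) auto
  also have "\<dots> \<le> Suc (card (?B1 \<inter> F))"
    using fin by (simp add: card_insert_if)
  finally have down: "card (B \<inter> F) \<le> Suc (card (?B1 \<inter> F))" .
  have step: "{min c c'..max c c'} \<subseteq> insert c {min c1 c'..max c1 c'}"
    if "c1 \<le> Suc c" "c \<le> Suc c1" for c c1 c' :: nat
    using that by (auto simp: min_def max_def)
  have "card (B \<inter> F) \<in> level_values M F"
    using exchange(1) by (simp add: level_values_def)
  then show ?case
    using step[OF up down, of "card (B' \<inter> F)"] exchange.IH by blast
qed

lemma level_values_eq:
  assumes F: "F \<subseteq> ground M"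
  shows "level_values M F = {rk M (ground M) - rk M (ground M - F) .. rk M F}"
proof
  show "level_values M F \<subseteq> {rk M (ground M) - rk M (ground M - F) .. rk M F}"
  proof
    fix v
    assume "v \<in> level_values M F"
    then obtain B where B: "B \<in> bases M" "v = card (B \<inter> F)"
      unfolding level_values_def by blast
    then show "v \<in> {rk M (ground M) - rk M (ground M - F) .. rk M F}"
      using card_basis_split[OF B(1), of F] card_basis_Int_le_rk[OF B(1), of F]
        card_basis_Int_le_rk[OF B(1), of "ground M - F"] by simp
  qed
next
  obtain B_hi where B_hi: "B_hi \<in> bases M" "card (B_hi \<inter> F) = rk M F"
    using rk_attained by blast
  obtain B_lo where B_lo: "B_lo \<in> bases M" "card (B_lo \<inter> (ground M - F)) = rk M (ground M - F)"
    using rk_attained by blast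
  then have "card (B_lo \<inter> F) = rk M (ground M) - rk M (ground M - F)"
    using card_basis_split[OF B_lo(1), of F] by simp
  moreover have "{a..b} \<subseteq> {min a b..max a b}" for a b :: nat
    by auto
  ultimately show "{rk M (ground M) - rk M (ground M - F) .. rk M F} \<subseteq> level_values M F"
    using level_values_between[OF B_lo(1) B_hi(1), of F] B_hi(2) by (metis order_trans)
qed

lemma card_level_values:
  assumes F: "F \<subseteq> ground M"
  shows "card (level_values M F) = rk M F + rk M (ground M - F) - rk M (ground M) + 1"
  using level_values_eq[OF F] rk_ground_le_compl[OF F] rk_mono[of "ground M - F" "ground M"]
  by simp

lemma card_sum_image_verts:
  assumes F: "F \<subseteq> ground M"
  shows "card ((\<lambda>x. \<Sum>e\<in>F. x e) ` verts M) = card (level_values M F)"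
proof -
  have "finite F"
    using F finite_ground finite_subset by blast
  then have "(\<lambda>x. \<Sum>e\<in>F. x e) ` verts M = real ` level_values M F"
    unfolding verts_def level_values_def image_image
    using sum_mult_indicator[of F "\<lambda>_. 1 :: real"] by (simp add: Int_commute)
  then show ?thesis
    by (simp add: card_image)
qed

lemma aff_indicator:
  assumes "B \<subseteq> ground M"
  shows "aff M a c (indicator B) = (\<Sum>e\<in>B. a e) + c"
  using assms finite_ground by (simp add: aff_def Int_absorb1)

lemma card_aff_image_le_levelness:
  assumes "facet_defining M a c"
  shows "card (aff M a c ` verts M) \<le> levelness M"
proof -
  let ?bounds = "\<lambda>k. \<forall>a c. facet_defining M a c \<longrightarrow> card (aff M a c ` verts M) \<le> k"
  have "finite (verts M)"
    unfolding verts_def using finite_bases by simp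
  then have "?bounds (card (verts M))"
    using card_image_le by blast
  then have "?bounds (LEAST k. ?bounds k)"
    by (rule LeastI)
  then show ?thesis
    using assms unfolding levelness_def by blast
qed

lemma tight_basis_Un:
  assumes J: "basis_of M F J" and "I \<inter> F = {}" "I \<union> J \<in> bases M"
  shows "I \<union> J \<in> tight_bases M F"
proof -
  have "(I \<union> J) \<inter> F = J"
    using assms(2) basis_of_subset[OF J] by auto
  then show ?thesis
    using assms(3) basis_of_card[OF J] by (simp add: tight_bases_def)
qed

lemma tight_exchange_of_restrict_exchange:
  assumes B1: "B1 \<in> bases (restrict M F)" and x: "x \<in> B1" and y: "y \<in> F - B1"
    and B1': "insert y (B1 - {x}) \<in> bases (restrict M F)"
  shows "\<exists>U\<in>tight_bases M F. x \<in> U \<and> y \<notin> U \<and> insert y (U - {x}) \<in> tight_bases M F"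
proof -
  interpret C: basis_matroid "contract M F"
    using matroid_contract by unfold_locales
  obtain B2 where "B2 \<in> bases (contract M F)"
    using C.bases_nonempty by blast
  moreover have J: "basis_of M F B1" "basis_of M F (insert y (B1 - {x}))"
    using B1 B1' by (simp_all add: bases_restrict)
  ultimately have B2: "B2 \<inter> F = {}" "B2 \<union> B1 \<in> bases M" "B2 \<union> insert y (B1 - {x}) \<in> bases M"
    using bases_contract_basis_of[OF J(1)] bases_contract_basis_of[OF J(2)] by auto
  have "insert y ((B2 \<union> B1) - {x}) = B2 \<union> insert y (B1 - {x})"
    using B2(1) x basis_of_subset[OF J(1)] by auto
  moreover have "x \<in> B2 \<union> B1" "y \<notin> B2 \<union> B1"
    using x y B2(1) by auto
  ultimately show ?thesis
    using tight_basis_Un[OF J(1) B2(1,2)] tight_basis_Un[OF J(2) B2(1,3)] by metis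
qed

lemma tight_exchange_of_contract_exchange:
  assumes B2: "B2 \<in> bases (contract M F)" and x: "x \<in> B2" and y: "y \<in> ground M - F - B2"
    and B2': "insert y (B2 - {x}) \<in> bases (contract M F)"
  shows "\<exists>U\<in>tight_bases M F. x \<in> U \<and> y \<notin> U \<and> insert y (U - {x}) \<in> tight_bases M F"
proof -
  obtain J where J: "basis_of M F J"
    using basis_of_exists by blast
  have U: "B2 \<inter> F = {}" "B2 \<union> J \<in> bases M"
    and U': "insert y (B2 - {x}) \<inter> F = {}" "insert y (B2 - {x}) \<union> J \<in> bases M"
    using B2 B2' bases_contract_basis_of[OF J] by auto
  have "x \<notin> J" "y \<notin> J"
    using U(1) x y basis_of_subset[OF J] by auto
  then have "insert y ((B2 \<union> J) - {x}) = insert y (B2 - {x}) \<union> J"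
    by auto
  moreover have "x \<in> B2 \<union> J" "y \<notin> B2 \<union> J"
    using x y \<open>y \<notin> J\<close> by auto
  ultimately show ?thesis
    using tight_basis_Un[OF J U] tight_basis_Un[OF J U'] by metis
qed

lemma flacet_affine_two_valued:
  fixes a :: "'a \<Rightarrow> real"
  assumes fl: "flacet M F"
    and vanish: "\<And>B. B \<in> tight_bases M F \<Longrightarrow> (\<Sum>e\<in>B. a e) + c = 0"
  shows "\<exists>\<alpha> \<beta>. (\<forall>e\<in>F. a e = \<alpha>) \<and> (\<forall>e\<in>ground M - F. a e = \<beta>)"
proof -
  have F: "F \<subseteq> ground M" "F \<noteq> {}" "F \<subset> ground M"
    and conn_R: "connected (restrict M F)" and conn_C: "connected (contract M F)"
    using fl unfolding flacet_def flat_def by auto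
  interpret R: basis_matroid "restrict M F"
    using matroid_restrict[OF F(1)] by unfold_locales
  interpret C: basis_matroid "contract M F"
    using matroid_contract by unfold_locales
  have exchange_eq: "a x = a y"
    if tight_exchange: "\<exists>U\<in>tight_bases M F. x \<in> U \<and> y \<notin> U \<and> insert y (U - {x}) \<in> tight_bases M F"
    for x y
  proof -
    obtain U where U: "U \<in> tight_bases M F" "x \<in> U" "y \<notin> U" "insert y (U - {x}) \<in> tight_bases M F"
      using tight_exchange by blast
    then show ?thesis
      using exchange_coeff_eq[OF _ U(2,3) vanish[OF U(1)] vanish[OF U(4)]] finite_basis
      by (simp add: tight_bases_def)
  qed
  obtain x0 where "x0 \<in> F"
    using F(2) by blast
  have "a e = a x0" if "e \<in> F" for e
  proof (rule R.connected_exchange_invariant[OF conn_R, where f = a])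
    fix B x y
    assume "B \<in> bases (restrict M F)" "x \<in> B" "y \<in> ground (restrict M F) - B"
      "insert y (B - {x}) \<in> bases (restrict M F)"
    then show "a x = a y"
      by (intro exchange_eq tight_exchange_of_restrict_exchange) auto
  qed (use that \<open>x0 \<in> F\<close> in auto)
  moreover obtain y0 where "y0 \<in> ground M - F"
    using F(3) by blast
  moreover have "a e = a y0" if "e \<in> ground M - F" for e
  proof (rule C.connected_exchange_invariant[OF conn_C, where f = a])
    fix B x y
    assume "B \<in> bases (contract M F)" "x \<in> B" "y \<in> ground (contract M F) - B"
      "insert y (B - {x}) \<in> bases (contract M F)"
    then show "a x = a y"
      by (intro exchange_eq tight_exchange_of_contract_exchange) auto
  qed (use that \<open>y0 \<in> ground M - F\<close> in auto)
  ultimately show ?thesis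
    by blast
qed

lemma verts_iff: "v \<in> verts M \<longleftrightarrow> (\<exists>B\<in>bases M. v = indicator B)"
  unfolding verts_def by blast

lemma aff_flacet_indicator:
  assumes "B \<in> bases M"
  shows "aff M (\<lambda>e. - indicator F e) (rk M F) (indicator B) = real (rk M F) - real (card (B \<inter> F))"
proof -
  have "(\<Sum>e\<in>B. - (indicator F e :: real)) = - real (card (B \<inter> F))"
    using finite_basis[OF assms] sum_mult_indicator[of B "\<lambda>_. 1 :: real" F]
    by (simp add: sum_negf)
  then show ?thesis
    using aff_indicator[OF basis_subset_ground[OF assms]] by simp
qed

lemma affine_vanishing_on_tight_bases:
  fixes a :: "'a \<Rightarrow> real"
  assumes fl: "flacet M F"
    and vanish: "\<And>B. B \<in> tight_bases M F \<Longrightarrow> (\<Sum>e\<in>B. a e) + c = 0"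
  shows "\<exists>\<gamma>. \<forall>B\<in>bases M. (\<Sum>e\<in>B. a e) + c = \<gamma> * (real (card (B \<inter> F)) - rk M F)"
proof -
  obtain \<alpha> \<beta> where \<alpha>: "\<forall>e\<in>F. a e = \<alpha>" and \<beta>: "\<forall>e\<in>ground M - F. a e = \<beta>"
    using flacet_affine_two_valued[OF fl vanish] by blast
  have sum_B: "(\<Sum>e\<in>B. a e) = \<alpha> * card (B \<inter> F) + \<beta> * (real (rk M (ground M)) - card (B \<inter> F))"
    if B: "B \<in> bases M" for B
  proof -
    have "(\<Sum>e\<in>B. a e) = (\<Sum>e\<in>B \<inter> F. a e) + (\<Sum>e\<in>B - F. a e)"
      using finite_basis[OF B] by (rule sum.Int_Diff)
    also have "\<dots> = \<alpha> * card (B \<inter> F) + \<beta> * card (B - F)"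
      using \<alpha> \<beta> basis_subset_ground[OF B] by (simp add: subset_iff)
    also have "real (card (B - F)) = real (rk M (ground M)) - card (B \<inter> F)"
      using card_Int_Diff[OF finite_basis[OF B], of F] rk_ground[OF B] by simp
    finally show ?thesis .
  qed
  obtain Bt where "Bt \<in> tight_bases M F"
    using rk_attained by (auto simp: tight_bases_def)
  then have c: "c = - \<alpha> * rk M F - \<beta> * (real (rk M (ground M)) - rk M F)"
    using vanish sum_B by (fastforce simp: tight_bases_def)
  have "(\<Sum>e\<in>B. a e) + c = (\<alpha> - \<beta>) * (real (card (B \<inter> F)) - rk M F)" if "B \<in> bases M" for B
    unfolding sum_B[OF that] c by (simp add: algebra_simps)
  then show ?thesis
    by blast
qed

lemma indicator_in_flacet_face_iff:
  assumes "B \<in> bases M"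
  shows "indicator B \<in> face_of_aff M (\<lambda>e. - indicator F e) (rk M F) \<longleftrightarrow> B \<in> tight_bases M F"
  using assms aff_flacet_indicator[OF assms] verts_iff
  by (auto simp: face_of_aff_def tight_bases_def)

lemma face_containing_flacet_face:
  assumes fl: "flacet M F" and G: "is_face M G" "G \<noteq> verts M"
    and sub: "face_of_aff M (\<lambda>e. - indicator F e) (rk M F) \<subseteq> G"
  shows "G = face_of_aff M (\<lambda>e. - indicator F e) (rk M F)"
proof -
  obtain a c where G_eq: "G = face_of_aff M a c"
    using G(1) unfolding is_face_def by blast
  have aff_B: "aff M a c (indicator B) = (\<Sum>e\<in>B. a e) + c" if "B \<in> bases M" for B
    using aff_indicator[OF basis_subset_ground[OF that]] .
  have "(\<Sum>e\<in>B. a e) + c = 0" if tight: "B \<in> tight_bases M F" for B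
  proof -
    have B: "B \<in> bases M"
      using tight by (simp add: tight_bases_def)
    then have "indicator B \<in> G"
      using indicator_in_flacet_face_iff[OF B] tight sub by blast
    then show ?thesis
      using G_eq aff_B[OF B] by (simp add: face_of_aff_def)
  qed
  then obtain \<gamma> where "\<forall>B\<in>bases M. (\<Sum>e\<in>B. a e) + c = \<gamma> * (real (card (B \<inter> F)) - rk M F)"
    using affine_vanishing_on_tight_bases[OF fl] by blast
  then have aff_scaled: "aff M a c (indicator B) = \<gamma> * (real (card (B \<inter> F)) - rk M F)"
    if "B \<in> bases M" for B
    using aff_B[OF that] that by simp
  have "\<gamma> \<noteq> 0"
  proof
    assume "\<gamma> = 0"
    then have "face_of_aff M a c = verts M"
      using aff_scaled verts_iff by (auto simp: face_of_aff_def)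
    then show False
      using G(2) G_eq by simp
  qed
  then show ?thesis
    using G_eq aff_scaled verts_iff aff_flacet_indicator by (auto simp: face_of_aff_def)
qed

lemma flacet_facet_defining:
  assumes fl: "flacet M F" and B0: "B0 \<in> bases M" "card (B0 \<inter> F) < rk M F"
  shows "facet_defining M (\<lambda>e. - indicator F e) (rk M F)"
proof -
  let ?face = "face_of_aff M (\<lambda>e. - indicator F e) (rk M F)"
  have "indicator B0 \<notin> ?face" "indicator B0 \<in> verts M"
    using indicator_in_flacet_face_iff[OF B0(1)] B0 verts_iff by (auto simp: tight_bases_def)
  then have "?face \<noteq> verts M"
    by blast
  moreover have nonneg: "\<forall>v\<in>verts M. aff M (\<lambda>e. - indicator F e) (rk M F) v \<ge> 0"
    using aff_flacet_indicator card_basis_Int_le_rk verts_iff by auto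
  ultimately have "is_facet M ?face"
    using face_containing_flacet_face[OF fl] unfolding is_facet_def is_face_def by blast
  then show ?thesis
    using nonneg unfolding facet_defining_def by blast
qed

lemma card_level_values_le_levelness:
  assumes fl: "flacet M F" and two: "2 \<le> card (level_values M F)"
  shows "card (level_values M F) \<le> levelness M"
proof -
  have "\<not> level_values M F \<subseteq> {rk M F}"
    using two card_mono[of "{rk M F}" "level_values M F"] by fastforce
  then obtain B0 where B0: "B0 \<in> bases M" "card (B0 \<inter> F) \<noteq> rk M F"
    unfolding level_values_def by blast
  then have "card (B0 \<inter> F) < rk M F"
    using card_basis_Int_le_rk[OF B0(1)] by (simp add: order_le_neq_trans)
  then have facet: "facet_defining M (\<lambda>e. - indicator F e) (rk M F)"
    using flacet_facet_defining[OF fl B0(1)] by blast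
  have "aff M (\<lambda>e. - indicator F e) (rk M F) ` verts M = (\<lambda>v. real (rk M F) - real v) ` level_values M F"
    unfolding verts_def level_values_def image_image using aff_flacet_indicator by simp
  moreover have "inj_on (\<lambda>v. real (rk M F) - real v) (level_values M F)"
    by (rule inj_onI) simp
  ultimately show ?thesis
    using card_aff_image_le_levelness[OF facet] by (simp add: card_image)
qed

end

section \<open>Deleting or contracting an element of a flacet\<close>

context basis_matroid
begin

lemma restrict_contract_singleton:
  assumes F: "F \<subseteq> ground M" and e: "e \<in> F" and e_indep: "indep M {e}"
  shows "restrict (contract M {e}) (F - {e}) = contract (restrict M F) {e}"
proof (rule matroid_eqI)
  interpret R: basis_matroid "restrict M F"
    using matroid_restrict[OF F] by unfold_locales
  interpret C: basis_matroid "contract M {e}"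
    using matroid_contract by unfold_locales
  have e_basis: "basis_of M {e} {e}" and e_basis_R: "basis_of (restrict M F) {e} {e}"
    using e_indep e by (auto simp: basis_of_def indep_restrict)
  have rk_C: "rk (contract M {e}) (F - {e}) = rk M F - 1"
    using rk_contract[of "F - {e}" "{e}"] e e_indep indep_singleton_iff_rk by (simp add: insert_absorb)
  have "rk M F \<ge> 1"
    using indep_card_le_rk[OF e_indep, of F] e by simp
  have "I \<in> bases (restrict (contract M {e}) (F - {e})) \<longleftrightarrow> I \<in> bases (contract (restrict M F) {e})" for I
  proof -
    have "I \<in> bases (restrict (contract M {e}) (F - {e})) \<longleftrightarrow>
          e \<notin> I \<and> indep M (I \<union> {e}) \<and> I \<subseteq> F - {e} \<and> card I = rk M F - 1"
      using C.bases_restrict_card indep_contract[OF e_basis] rk_C by auto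
    moreover have "I \<in> bases (contract (restrict M F) {e}) \<longleftrightarrow>
          e \<notin> I \<and> indep M (I \<union> {e}) \<and> I \<union> {e} \<subseteq> F \<and> card (I \<union> {e}) = rk M F"
      using R.bases_contract_basis_of[OF e_basis_R] bases_restrict_card by auto
    moreover have "card (I \<union> {e}) = card I + 1" if "indep M (I \<union> {e})" "e \<notin> I"
      using finite_indep[OF that(1)] that(2) by simp
    ultimately show ?thesis
      using \<open>rk M F \<ge> 1\<close> e by auto
  qed
  then show "bases (restrict (contract M {e}) (F - {e})) = bases (contract (restrict M F) {e})"
    by blast
qed simp

lemma contract_contract_singleton:
  assumes F: "F \<subseteq> ground M" and e: "e \<in> F" and e_indep: "indep M {e}"
  shows "contract (contract M {e}) (F - {e}) = contract M F"
proof (rule matroid_eqI)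
  interpret C: basis_matroid "contract M {e}"
    using matroid_contract by unfold_locales
  have e_basis: "basis_of M {e} {e}"
    using e_indep by (auto simp: basis_of_def)
  obtain J where J: "basis_of M F J" "e \<in> J"
    using basis_of_extend[OF e_indep] e by blast
  have "rk (contract M {e}) (F - {e}) = rk M F - 1"
    using rk_contract[of "F - {e}" "{e}"] e e_indep indep_singleton_iff_rk by (simp add: insert_absorb)
  moreover have "(J - {e}) \<union> {e} = J"
    using J(2) by auto
  ultimately have J': "basis_of (contract M {e}) (F - {e}) (J - {e})"
    using C.basis_of_iff indep_contract[OF e_basis] basis_of_iff J basis_of_subset[OF J(1)]
      finite_indep[OF basis_of_indep[OF J(1)]] by auto
  have "I \<in> bases (contract (contract M {e}) (F - {e})) \<longleftrightarrow> I \<in> bases (contract M F)" for I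
  proof -
    have "I \<in> bases (contract (contract M {e}) (F - {e})) \<longleftrightarrow>
        I \<inter> (F - {e}) = {} \<and> e \<notin> I \<and> (I \<union> (J - {e})) \<union> {e} \<in> bases M"
      using C.bases_contract_basis_of[OF J'] bases_contract_basis_of[OF e_basis] J(2) by auto
    moreover have "(I \<union> (J - {e})) \<union> {e} = I \<union> J"
      using J(2) by auto
    ultimately show ?thesis
      using bases_contract_basis_of[OF J(1)] e by auto
  qed
  then show "bases (contract (contract M {e}) (F - {e})) = bases (contract M F)"
    by blast
qed (use e in auto)

lemma contract_delete_eq:
  assumes F: "F \<subseteq> ground M" and e: "e \<in> F"
    and rk_F: "rk M (F - {e}) = rk M F" and rk_E: "rk M (ground M - {e}) = rk M (ground M)"
  shows "contract (restrict M (ground M - {e})) (F - {e}) = contract M F"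
proof (rule matroid_eqI)
  interpret D: basis_matroid "restrict M (ground M - {e})"
    using matroid_restrict[of "ground M - {e}"] by unfold_locales auto
  obtain J where J: "basis_of M (F - {e}) J"
    using basis_of_exists by blast
  then have J_F: "basis_of M F J"
    using rk_F by (auto simp: basis_of_iff)
  have "rk (restrict M (ground M - {e})) (F - {e}) = rk M (F - {e})"
    using F by (intro rk_restrict) auto
  then have J_D: "basis_of (restrict M (ground M - {e})) (F - {e}) J"
    using J F by (auto simp: D.basis_of_iff basis_of_iff indep_restrict)
  have bases_D: "B \<in> bases (restrict M (ground M - {e})) \<longleftrightarrow> B \<in> bases M \<and> e \<notin> B" for B
  proof -
    have "B \<in> bases (restrict M (ground M - {e})) \<longleftrightarrow>
        indep M B \<and> B \<subseteq> ground M - {e} \<and> card B = rk M (ground M)"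
      using rk_E by (simp add: bases_restrict_card)
    also have "\<dots> \<longleftrightarrow> B \<in> bases M \<and> e \<notin> B"
    proof
      assume "indep M B \<and> B \<subseteq> ground M - {e} \<and> card B = rk M (ground M)"
      then show "B \<in> bases M \<and> e \<notin> B"
        using indep_card_rk_basis by blast
    next
      assume "B \<in> bases M \<and> e \<notin> B"
      then show "indep M B \<and> B \<subseteq> ground M - {e} \<and> card B = rk M (ground M)"
        using basis_indep basis_subset_ground rk_ground by auto
    qed
    finally show ?thesis .
  qed
  have "I \<in> bases (contract (restrict M (ground M - {e})) (F - {e})) \<longleftrightarrow> I \<in> bases (contract M F)" for I
    using D.bases_contract_basis_of[OF J_D] bases_contract_basis_of[OF J_F] bases_D
      basis_of_subset[OF J] e by auto
  then show "bases (contract (restrict M (ground M - {e})) (F - {e})) = bases (contract M F)"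
    by blast
qed (use e in auto)

lemma flat_delete:
  assumes flat: "flat M F" and e: "e \<in> F" and rk_F: "rk M (F - {e}) = rk M F"
  shows "flat (restrict M (ground M - {e})) (F - {e})"
  unfolding flat_def
proof (intro conjI ballI)
  show "F - {e} \<subseteq> ground (restrict M (ground M - {e}))"
    using flat by (auto simp: flat_def)
  fix y
  assume y: "y \<in> ground (restrict M (ground M - {e})) - (F - {e})"
  then have "y \<in> ground M - F"
    by auto
  then have "rk M F < rk M (insert y F)"
    using flat by (simp add: flat_def)
  moreover have "insert y (F - {e}) \<union> F = insert y F" "insert y (F - {e}) \<inter> F = F - {e}"
    using e \<open>y \<in> ground M - F\<close> by auto
  ultimately have "rk M (F - {e}) < rk M (insert y (F - {e}))"
    using rk_submod[of "insert y (F - {e})" F] rk_F by simp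
  moreover have "insert y (F - {e}) \<subseteq> ground M - {e}"
    using y flat by (auto simp: flat_def)
  ultimately show "rk (restrict M (ground M - {e})) (F - {e}) < rk (restrict M (ground M - {e})) (insert y (F - {e}))"
    by (simp add: rk_restrict)
qed

lemma flat_contract:
  assumes flat: "flat M F" and e: "e \<in> F" and e_indep: "indep M {e}"
  shows "flat (contract M {e}) (F - {e})"
  unfolding flat_def
proof (intro conjI ballI)
  show "F - {e} \<subseteq> ground (contract M {e})"
    using flat by (auto simp: flat_def)
  fix y
  assume y: "y \<in> ground (contract M {e}) - (F - {e})"
  then have "y \<in> ground M - F"
    using e by auto
  then have "rk M F < rk M (insert y F)"
    using flat by (simp add: flat_def)
  moreover have "(F - {e}) \<union> {e} = F" "insert y (F - {e}) \<union> {e} = insert y F"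
    using e by auto
  moreover have "(F - {e}) \<inter> {e} = {}" "insert y (F - {e}) \<inter> {e} = {}"
    using y by auto
  ultimately show "rk (contract M {e}) (F - {e}) < rk (contract M {e}) (insert y (F - {e}))"
    using rk_contract[of "F - {e}" "{e}"] rk_contract[of "insert y (F - {e})" "{e}"]
      indep_card_le_rk[OF e_indep, of F] indep_singleton_iff_rk[of e] e_indep e by simp
qed

lemma level_flacet_iff:
  assumes "flacet M F"
  shows "level_flacet M F k \<longleftrightarrow> k = rk M F + rk M (ground M - F) - rk M (ground M) + 1"
proof -
  have "F \<subseteq> ground M"
    using assms by (simp add: flacet_def flat_def)
  then show ?thesis
    using assms card_sum_image_verts[of F] card_level_values[of F] by (auto simp: level_flacet_def)
qed

lemma level_flacet_le_levelness:
  assumes "level_flacet M F k" "2 \<le> k"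
  shows "k \<le> levelness M"
proof -
  have "F \<subseteq> ground M" "flacet M F" "card ((\<lambda>x. \<Sum>e\<in>F. x e) ` verts M) = k"
    using assms(1) by (simp_all add: level_flacet_def flacet_def flat_def)
  then show ?thesis
    using assms(2) card_sum_image_verts[of F] card_level_values_le_levelness[of F] by simp
qed

lemma level_flacet_delete:
  assumes lf: "level_flacet M F k" and e: "e \<in> F" "F \<noteq> {e}"
    and conn: "connected (restrict M (F - {e}))"
  shows "level_flacet (restrict M (ground M - {e})) (F - {e}) k"
proof -
  let ?E = "ground M - {e}"
  have "flacet M F"
    using lf by (simp add: level_flacet_def)
  then have F: "F \<subseteq> ground M" "F \<subset> ground M" and "flat M F"
    and conn_R: "connected (restrict M F)" and conn_C: "connected (contract M F)"
    and k: "k = rk M F + rk M (ground M - F) - rk M (ground M) + 1"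
    using lf level_flacet_iff by (auto simp: flacet_def flat_def)
  interpret R: basis_matroid "restrict M F"
    using matroid_restrict[OF F(1)] by unfold_locales
  interpret N: basis_matroid "restrict M ?E"
    using matroid_restrict[of ?E] by unfold_locales auto
  \<comment> \<open>Connectivity of the restriction to F forbids e from being a coloop there.\<close>
  have "rk M F < rk M {e} + rk M (F - {e})"
    using R.connected_rk_gt[OF conn_R, of "{e}"] e F(1) by (auto simp: rk_restrict)
  then have rk_F: "rk M (F - {e}) = rk M F"
    using rk_singleton_le[of e] rk_mono[OF Diff_subset, of F "{e}"] by linarith
  have "F \<union> ?E = ground M" "F \<inter> ?E = F - {e}"
    using F(1) e(1) by auto
  then have rk_E: "rk M ?E = rk M (ground M)"
    using rk_submod[of F ?E] rk_F rk_mono[of ?E "ground M"] by simp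
  have flacet_N: "flacet (restrict M ?E) (F - {e})"
    unfolding flacet_def
    using flat_delete[OF \<open>flat M F\<close> e(1) rk_F] e F(2) conn conn_C
      restrict_restrict[of "F - {e}" ?E] contract_delete_eq[OF F(1) e(1) rk_F rk_E]
    by (auto simp: flat_def)
  moreover have "?E - (F - {e}) = ground M - F"
    using e(1) by auto
  moreover have "ground M - F \<subseteq> ?E"
    using e(1) by auto
  ultimately have "rk (restrict M ?E) (?E - (F - {e})) = rk M (ground M - F)"
    by (simp add: rk_restrict)
  then show ?thesis
    unfolding N.level_flacet_iff[OF flacet_N] using k rk_F rk_E F(1)
    by (simp add: rk_restrict Diff_mono)
qed

lemma level_flacet_contract:
  assumes lf: "level_flacet M F k" and e: "e \<in> F" "F \<noteq> {e}"
    and unspanned: "rk M (insert e (ground M - F)) = Suc (rk M (ground M - F))"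
    and conn: "connected (contract (restrict M F) {e})"
  shows "level_flacet (contract M {e}) (F - {e}) k"
proof -
  have "flacet M F"
    using lf by (simp add: level_flacet_def)
  then have F: "F \<subseteq> ground M" "F \<subset> ground M" and "flat M F" and conn_C: "connected (contract M F)"
    and k: "k = rk M F + rk M (ground M - F) - rk M (ground M) + 1"
    using lf level_flacet_iff by (auto simp: flacet_def flat_def)
  interpret N: basis_matroid "contract M {e}"
    using matroid_contract by unfold_locales
  have "rk M (insert e (ground M - F)) \<le> rk M (ground M - F) + rk M {e}"
    using rk_Un_le[of "ground M - F" "{e}"] by simp
  then have e_indep: "indep M {e}"
    using unspanned rk_singleton_le[of e] indep_singleton_iff_rk by simp
  have rk_N: "rk (contract M {e}) A = rk M (A \<union> {e}) - 1" if "e \<notin> A" for A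
    using rk_contract[of A "{e}"] that e_indep indep_singleton_iff_rk by auto
  have "(F - {e}) \<union> {e} = F" "(ground M - {e}) \<union> {e} = ground M" "(ground M - F) \<union> {e} = insert e (ground M - F)"
    "ground M - {e} - (F - {e}) = ground M - F"
    using e(1) F(1) by auto
  moreover have "1 \<le> rk M F" "1 \<le> rk M (ground M)"
    using indep_card_le_rk[OF e_indep] e(1) F(1) by auto
  moreover have flacet_N: "flacet (contract M {e}) (F - {e})"
    unfolding flacet_def
    using flat_contract[OF \<open>flat M F\<close> e(1) e_indep] e F(2) conn conn_C
      restrict_contract_singleton[OF F(1) e(1) e_indep] contract_contract_singleton[OF F(1) e(1) e_indep]
    by (auto simp: flat_def)
  ultimately show ?thesis
    unfolding N.level_flacet_iff[OF flacet_N]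
    using k rk_N[of "F - {e}"] rk_N[of "ground M - {e}"] rk_N[of "ground M - F"] unspanned
      rk_ground_le_compl[OF F(1)] e(1)
    by simp
qed

lemma exists_unspanned_element:
  assumes F: "F \<subseteq> ground M" and lt: "rk M (ground M - F) < rk M (ground M)"
  shows "\<exists>e\<in>F. rk M (insert e (ground M - F)) = Suc (rk M (ground M - F))"
proof -
  obtain W where W: "basis_of M (ground M - F) W"
    using basis_of_exists by blast
  then obtain K where K: "basis_of M (ground M) K" "W \<subseteq> K"
    using basis_of_extend[OF basis_of_indep[OF W]] basis_of_subset[OF W] by blast
  then have "W \<subset> K"
    using basis_of_card[OF W] basis_of_card[OF K(1)] lt by auto
  then obtain e where e: "e \<in> K" "e \<notin> W"
    by blast
  have W_e: "indep M (insert e W)"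
    using e K basis_of_indep indep_subset by blast
  have "e \<notin> ground M - F"
  proof
    assume "e \<in> ground M - F"
    then have "card (insert e W) \<le> rk M (ground M - F)"
      using W_e basis_of_subset[OF W] by (intro indep_card_le_rk) auto
    then show False
      using e(2) basis_of_card[OF W] finite_indep[OF W_e] by simp
  qed
  then have "e \<in> F"
    using e(1) basis_of_subset[OF K(1)] by auto
  moreover have "card (insert e W) \<le> rk M (insert e (ground M - F))"
    using W_e basis_of_subset[OF W] by (intro indep_card_le_rk) auto
  moreover have "rk M (insert e (ground M - F)) \<le> rk M (ground M - F) + 1"
    using rk_Un_le[of "ground M - F" "{e}"] rk_singleton_le[of e] by simp
  ultimately show ?thesis
    using e(2) basis_of_card[OF W] finite_indep[OF basis_of_indep[OF W]] by auto
qed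

lemma proper_minor_delete: "e \<in> ground M \<Longrightarrow> proper_minor (restrict M (ground M - {e})) M"
  unfolding proper_minor_def
  using basis_matroid.contract_empty[OF basis_matroid.intro, OF matroid_restrict, of "ground M - {e}"]
  by (intro exI[of _ "ground M - {e}"] exI[of _ "{}"]) auto

lemma proper_minor_contract: "e \<in> ground M \<Longrightarrow> proper_minor (contract M {e}) M"
  unfolding proper_minor_def
  using restrict_ground by (intro exI[of _ "ground M"] exI[of _ "{e}"]) auto

lemma proper_minor_empty:
  assumes "ground M \<noteq> {}"
  shows "proper_minor ({}, {{}}) M"
proof -
  have "bases (restrict M {}) = {{}}"
    using indep_empty by (auto simp: bases_restrict_card)
  then have "restrict M {} = ({}, {{}})"
    by (intro matroid_eqI) (simp_all add: ground_def restrict_def bases_def)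
  moreover have "contract (({}, {{}}) :: 'a matroid) {} = ({}, {{}})"
    by (simp add: contract_def ground_def bases_def rk_def)
  ultimately show ?thesis
    using assms unfolding proper_minor_def by (intro exI[of _ "{}"]) auto
qed

end

section \<open>Minimally \<open>k\<close>-level matroids\<close>

lemma levelness_empty_matroid: "1 \<le> levelness (({}, {{}}) :: 'a matroid)"
proof -
  let ?N = "({}, {{}}) :: 'a matroid"
  interpret N: basis_matroid ?N
    by unfold_locales (simp add: matroid_def ground_def bases_def)
  have verts_N: "verts ?N = {indicator {}}"
    by (simp add: verts_def bases_def)
  have aff_N: "aff ?N a c v = c" for a c v
    by (simp add: aff_def ground_def)
  have "is_facet ?N {}"
    unfolding is_facet_def
  proof (intro conjI allI impI)
    show "is_face ?N {}"
      unfolding is_face_def face_of_aff_def aff_N by (intro exI[of _ "\<lambda>_. 0"] exI[of _ 1]) simp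
    show "{} \<noteq> verts ?N"
      using verts_N by simp
    fix G
    assume G: "is_face ?N G \<and> G \<noteq> verts ?N \<and> {} \<subseteq> G"
    then have "G \<subseteq> {indicator {}}"
      using verts_N unfolding is_face_def face_of_aff_def by auto
    then show "G = {}"
      using G verts_N by (auto simp: subset_singleton_iff)
  qed
  then have "facet_defining ?N (\<lambda>_. 0) 1"
    unfolding facet_defining_def face_of_aff_def aff_N by simp
  then show ?thesis
    using N.card_aff_image_le_levelness[of "\<lambda>_. 0" 1] verts_N aff_N by simp
qed

lemma (in basis_matroid) minimally_level_ge_two:
  assumes "minimally_level M k" "ground M \<noteq> {}"
  shows "2 \<le> k"
proof -
  have "matroid (({}, {{}}) :: 'a matroid)"
    by (simp add: matroid_def ground_def bases_def)
  then have "levelness (({}, {{}}) :: 'a matroid) < k"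
    using assms proper_minor_empty unfolding minimally_level_def by blast
  then show ?thesis
    using levelness_empty_matroid[where 'a = 'a] by linarith
qed

lemma (in basis_matroid) level_flacet_in_proper_minor:
  assumes lf: "level_flacet M F k" and "2 \<le> k" and "rk M F \<noteq> k - 1"
  shows "\<exists>N F'. matroid N \<and> proper_minor N M \<and> level_flacet N F' k"
proof -
  have "flacet M F"
    using lf by (simp add: level_flacet_def)
  then have F: "F \<subseteq> ground M" and conn: "connected (restrict M F)"
    and "k = rk M F + rk M (ground M - F) - rk M (ground M) + 1"
    using lf level_flacet_iff by (auto simp: flacet_def flat_def)
  then have "rk M (ground M - F) < rk M (ground M)" "2 \<le> rk M F"
    using assms(2,3) rk_mono[of "ground M - F" "ground M"] rk_ground_le_compl[OF F] by auto
  then obtain e where e: "e \<in> F" "rk M (insert e (ground M - F)) = Suc (rk M (ground M - F))"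
    using exists_unspanned_element[OF F] by blast
  have "F \<noteq> {e}"
    using \<open>2 \<le> rk M F\<close> rk_singleton_le[of e] by auto
  interpret R: basis_matroid "restrict M F"
    using matroid_restrict[OF F] by unfold_locales
  have "connected (restrict (restrict M F) (F - {e})) \<or> connected (contract (restrict M F) {e})"
    using R.connected_delete_or_contract[OF conn, of e] e(1) by simp
  then have "connected (restrict M (F - {e})) \<or> connected (contract (restrict M F) {e})"
    unfolding restrict_restrict[OF Diff_subset] .
  then show ?thesis
    using level_flacet_delete[OF lf e(1) \<open>F \<noteq> {e}\<close>] level_flacet_contract[OF lf e(1) \<open>F \<noteq> {e}\<close> e(2)]
      matroid_restrict[of "ground M - {e}"] matroid_contract[of "{e}"]
      proper_minor_delete proper_minor_contract e(1) F by blast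
qed

theorem proposition6p6:
  fixes M :: "'a matroid" and F :: "'a set" and k :: nat
  assumes "matroid M"
    and "minimally_level M k"
    and "level_flacet M F k"
  shows "rk M F = k - 1"
proof (rule ccontr)
  interpret basis_matroid M
    by unfold_locales fact
  assume "rk M F \<noteq> k - 1"
  have "ground M \<noteq> {}"
    using assms(3) by (auto simp: level_flacet_def flacet_def)
  then have "2 \<le> k"
    using minimally_level_ge_two[OF assms(2)] by blast
  then obtain N F' where N: "matroid N" "proper_minor N M" "level_flacet N F' k"
    using level_flacet_in_proper_minor[OF assms(3)] \<open>rk M F \<noteq> k - 1\<close> by blast
  then have "k \<le> levelness N"
    using basis_matroid.level_flacet_le_levelness[OF basis_matroid.intro] \<open>2 \<le> k\<close> by blast
  moreover have "levelness N < k"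
    using assms(2) N(1,2) unfolding minimally_level_def by blast
  ultimately show False
    by simp
qed

end
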